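(* Assume $f$ is in Case 2. Let $l>0$ if $\delta\le d$, and $0<l<\alpha$ if $\delta>d$. Then there exist positive numbers $r_1,r_2$, which can be taken arbitrarily small, such that $f(U^l_{r_1,r_2})\subset U^l_{r_1,r_2}$, where $U^l_{r_1,r_2}=\{|z|<r_1,\ |w|<r_2|z|^l\}$.
   Context: Let $f(z,w)=(p(z),q(z,w))$ be a holomorphic skew product defined near the origin of $\mathbb{C}^2$ with $p(z)=az^{\delta}+O(z^{\delta+1})$, $a\neq0$, $\delta\ge2$, and $q(z,w)=\sum_{i,j\ge0}b_{ij}z^iw^j$ with $b_{00}=b_{01}=0$. The Newton polygon $N(q)$ is the convex hull of $\bigcup_{b_{ij}\ne0}\{(x,y):x\ge i,\ y\ge j\}$, with vertices $(n_1,m_1),\dots,(n_s,m_s)$, $n_1<\dots<n_s$, $m_1>\dots>m_s$, $s>1$. $T_{s-1}$ is the $y$-intercept of the line through $(n_{s-1},m_{s-1})$ and $(n_s,m_s)$. Case 2 means $\delta\le T_{s-1}$; then set $(\gamma,d)=(n_s,m_s)$ (so $\gamma>0$) and, when $\delta\neq d$, $\alpha=\gamma/(\delta-d)$. *)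

theory Defs
  imports "HOL-Analysis.Analysis"
begin

definition newton_polygon :: "(nat \<Rightarrow> nat \<Rightarrow> complex) \<Rightarrow> (real \<times> real) set" where
  "newton_polygon b =
     convex hull (\<Union>{ {xy. fst xy \<ge> real i \<and> snd xy \<ge> real j} | i j. b i j \<noteq> 0 })"

definition y_intercept :: "real \<times> real \<Rightarrow> real \<times> real \<Rightarrow> real" where
  "y_intercept P Q = snd P - fst P * (snd Q - snd P) / (fst Q - fst P)"

definition U_region :: "real \<Rightarrow> real \<Rightarrow> real \<Rightarrow> (complex \<times> complex) set" where
  "U_region l r1 r2 = {(z, w). norm z < r1 \<and> norm w < r2 * norm z powr l}"

end

(*
  Write t = |z|. The Newton polygon lies on or above the height m_s of its last vertex and
  above the line through its last two vertices; with Case 2 and the bound on l this gives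
  i + l j > l delta for every monomial z^i w^j of q with j < delta. On U the monomials with
  j >= delta are O(r2^delta t^(l delta)), those of high degree in z are O(t t^(l delta)), and
  the finitely many others are O(t^eta t^(l delta)) for a uniform gap eta > 0, so
  |q| <= K (r2^delta + t + t^eta) t^(l delta). Meanwhile |p(z)| >= |a|/2 t^delta and
  |p(z)| < t. As delta >= 2, r2^delta is small compared with r2, so choosing r2 small and then
  r1 small gives |q| < r2 |p|^l.
*)

theory Submission
  imports Defs
begin

section \<open>Extreme points of the Newton polygon\<close>

lemma support_in_newton_polygon: "b i j \<noteq> 0 \<Longrightarrow> (real i, real j) \<in> newton_polygon b"
  unfolding newton_polygon_def
  by (rule hull_inc, rule UnionI[of "{xy. real i \<le> fst xy \<and> real j \<le> snd xy}"]) auto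

lemma newton_polygon_subset_halfspace:
  fixes b :: "nat \<Rightarrow> nat \<Rightarrow> complex" and c0 c1 c2 :: real
  assumes "0 \<le> c1" "0 \<le> c2"
    and support: "\<And>i j. b i j \<noteq> 0 \<Longrightarrow> c0 \<le> c1 * real i + c2 * real j"
  shows "newton_polygon b \<subseteq> {u. c0 \<le> c1 * fst u + c2 * snd u}"
  unfolding newton_polygon_def
proof (rule hull_minimal)
  show "convex {u. c0 \<le> c1 * fst u + c2 * snd u}"
    using convex_halfspace_ge[where a = "(c1, c2)" and b = c0] by (simp add: inner_prod_def mult.commute)
  show "\<Union>{{xy. real i \<le> fst xy \<and> real j \<le> snd xy} | i j. b i j \<noteq> 0}
          \<subseteq> {u. c0 \<le> c1 * fst u + c2 * snd u}"
  proof clarify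
    fix i j and x y :: real
    assume "b i j \<noteq> 0" "real i \<le> fst (x, y)" "real j \<le> snd (x, y)"
    then have "c1 * real i \<le> c1 * x" "c2 * real j \<le> c2 * y"
      using assms(1,2) by (simp_all add: mult_left_mono)
    with support[OF \<open>b i j \<noteq> 0\<close>] show "c0 \<le> c1 * fst (x, y) + c2 * snd (x, y)"
      by simp
  qed
qed

lemma newton_polygon_upward_closed:
  assumes "u \<in> newton_polygon b" "0 \<le> x" "0 \<le> y"
  shows "u + (x, y) \<in> newton_polygon b"
proof -
  let ?Q = "\<Union>{{xy. real i \<le> fst xy \<and> real j \<le> snd xy} | i j. b i j \<noteq> 0}"
  have "(\<lambda>v. (x, y) + v) ` ?Q \<subseteq> ?Q"
  proof (rule image_subsetI)
    fix v assume "v \<in> ?Q"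
    then obtain i j where "b i j \<noteq> 0" "real i \<le> fst v" "real j \<le> snd v"
      by blast
    then show "(x, y) + v \<in> ?Q"
      using assms(2,3) by (intro UnionI[of "{xy. real i \<le> fst xy \<and> real j \<le> snd xy}"]) auto
  qed
  then have "(\<lambda>v. (x, y) + v) ` newton_polygon b \<subseteq> newton_polygon b"
    unfolding newton_polygon_def convex_hull_translation[symmetric] by (rule hull_mono)
  then show ?thesis
    using assms(1) by (auto simp: add.commute)
qed

lemma finite_positive_values_bounded_below:
  fixes f :: "'a \<Rightarrow> real"
  assumes "finite S"
  shows "\<exists>g>0. \<forall>x\<in>S. 0 < f x \<longrightarrow> g \<le> f x"
  using assms by (intro exI[of _ "Min (insert 1 (f ` {x\<in>S. 0 < f x}))"]) auto

lemma finite_weighted_sublevel: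
  fixes \<alpha> \<beta> c :: real
  assumes "0 < \<alpha>" "0 < \<beta>"
  shows "finite {(i, j). \<alpha> * real i + \<beta> * real j \<le> c}"
proof (rule finite_subset)
  have "i \<le> nat \<lceil>c / \<alpha>\<rceil> \<and> j \<le> nat \<lceil>c / \<beta>\<rceil>" if "\<alpha> * real i + \<beta> * real j \<le> c" for i j :: nat
  proof -
    have "\<alpha> * real i \<le> c" "\<beta> * real j \<le> c"
      using that assms by (smt (verit) mult_nonneg_nonneg of_nat_0_le_iff)+
    then have "real i \<le> c / \<alpha>" "real j \<le> c / \<beta>"
      using assms by (simp_all add: pos_le_divide_eq mult.commute)
    then show ?thesis
      by linarith
  qed
  then show "{(i, j). \<alpha> * real i + \<beta> * real j \<le> c} \<subseteq> {..nat \<lceil>c / \<alpha>\<rceil>} \<times> {..nat \<lceil>c / \<beta>\<rceil>}"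
    by auto
qed simp

lemma weighted_nat_sums_gap:
  fixes \<alpha> \<beta> \<mu> :: real
  assumes "0 < \<alpha>" "0 < \<beta>"
  shows "\<exists>g>0. \<forall>i j. \<mu> < \<alpha> * real i + \<beta> * real j \<longrightarrow> \<mu> + g \<le> \<alpha> * real i + \<beta> * real j"
proof -
  obtain g where "0 < g" and g: "\<forall>i j. \<alpha> * real i + \<beta> * real j \<le> \<mu> + 1 \<longrightarrow>
      \<mu> < \<alpha> * real i + \<beta> * real j \<longrightarrow> g \<le> \<alpha> * real i + \<beta> * real j - \<mu>"
    using finite_positive_values_bounded_below[OF finite_weighted_sublevel[OF assms, of "\<mu> + 1"],
        where f = "\<lambda>(i, j). \<alpha> * real i + \<beta> * real j - \<mu>"]
    by (auto simp: case_prod_beta)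
  show ?thesis
  proof (intro exI[of _ "min g 1"] conjI allI impI)
    fix i j :: nat
    assume "\<mu> < \<alpha> * real i + \<beta> * real j"
    then show "\<mu> + min g 1 \<le> \<alpha> * real i + \<beta> * real j"
      using g[rule_format, of i j] min.cobounded1[of g 1] min.cobounded2[of g 1]
      by (cases "\<alpha> * real i + \<beta> * real j \<le> \<mu> + 1") auto
  qed (use \<open>0 < g\<close> in simp)
qed

lemma extreme_point_of_lex_minimizer:
  fixes S :: "(real \<times> real) set" and \<alpha> \<beta> :: real
  assumes "v \<in> S" "0 < \<beta>"
    and min: "\<And>u. u \<in> S \<Longrightarrow> \<alpha> * fst v + \<beta> * snd v \<le> \<alpha> * fst u + \<beta> * snd u"
    and tie: "\<And>u. u \<in> S \<Longrightarrow> \<alpha> * fst u + \<beta> * snd u = \<alpha> * fst v + \<beta> * snd v \<Longrightarrow> fst v \<le> fst u"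
  shows "v extreme_point_of S"
  unfolding extreme_point_of_def
proof (intro conjI \<open>v \<in> S\<close> ballI notI)
  fix x y assume "x \<in> S" "y \<in> S" "v \<in> open_segment x y"
  then obtain t where "x \<noteq> y" "0 < t" "t < 1" and v: "v = (1 - t) *\<^sub>R x + t *\<^sub>R y"
    unfolding in_segment by blast
  define \<phi> where "\<phi> u = \<alpha> * fst u + \<beta> * snd u" for u :: "real \<times> real"
  have both_zero: "A = 0 \<and> C = 0" if "0 \<le> A" "0 \<le> C" "(1 - t) * A + t * C = 0" for A C
    using that \<open>0 < t\<close> \<open>t < 1\<close> by (smt (verit) mult_pos_pos mult_nonneg_nonneg)
  have "(1 - t) * (\<phi> x - \<phi> v) + t * (\<phi> y - \<phi> v) = 0"
    unfolding \<phi>_def v by (simp add: algebra_simps)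
  then have "\<phi> x - \<phi> v = 0 \<and> \<phi> y - \<phi> v = 0"
    using min[OF \<open>x \<in> S\<close>] min[OF \<open>y \<in> S\<close>] unfolding \<phi>_def by (intro both_zero) auto
  then have "\<phi> x = \<phi> v" "\<phi> y = \<phi> v"
    by simp_all
  moreover have "(1 - t) * (fst x - fst v) + t * (fst y - fst v) = 0"
    unfolding v by (simp add: algebra_simps)
  ultimately have "fst x - fst v = 0 \<and> fst y - fst v = 0"
    using tie[OF \<open>x \<in> S\<close>] tie[OF \<open>y \<in> S\<close>] unfolding \<phi>_def by (intro both_zero) auto
  then have "fst x = fst v" "fst y = fst v"
    by simp_all
  with \<open>\<phi> x = \<phi> v\<close> \<open>\<phi> y = \<phi> v\<close> have "snd x = snd y"
    using \<open>0 < \<beta>\<close> unfolding \<phi>_def by simp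
  with \<open>fst x = fst v\<close> \<open>fst y = fst v\<close> \<open>x \<noteq> y\<close> show False
    by (simp add: prod_eq_iff)
qed

lemma support_weighted_minimum:
  fixes \<alpha> \<beta> :: real
  assumes "0 < \<alpha>" "0 < \<beta>" and "b i0 j0 \<noteq> 0"
  shows "\<exists>\<mu>\<le>\<alpha> * real i0 + \<beta> * real j0. (\<forall>i j. b i j \<noteq> 0 \<longrightarrow> \<mu> \<le> \<alpha> * real i + \<beta> * real j) \<and>
           (\<exists>i j. b i j \<noteq> 0 \<and> \<alpha> * real i + \<beta> * real j = \<mu>)"
proof -
  define \<phi> where "\<phi> ij = \<alpha> * real (fst ij) + \<beta> * real (snd ij)" for ij :: "nat \<times> nat"
  define S where "S = {ij. b (fst ij) (snd ij) \<noteq> 0 \<and> \<phi> ij \<le> \<phi> (i0, j0)}"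
  have "finite S"
    using finite_weighted_sublevel[OF assms(1,2), of "\<phi> (i0, j0)"]
    by (rule rev_finite_subset) (auto simp: S_def \<phi>_def)
  moreover have "(i0, j0) \<in> S"
    using assms(3) by (simp add: S_def)
  ultimately have "Min (\<phi> ` S) \<in> \<phi> ` S" "Min (\<phi> ` S) \<le> \<phi> (i0, j0)"
    and "\<And>ij. ij \<in> S \<Longrightarrow> Min (\<phi> ` S) \<le> \<phi> ij"
    by (auto intro: Min_in Min_le)
  then show ?thesis
    by (intro exI[of _ "Min (\<phi> ` S)"]) (force simp: S_def \<phi>_def)
qed

lemma newton_polygon_level_line_bound:
  fixes \<alpha> \<beta> \<mu> :: real
  assumes "0 < \<alpha>" "0 < \<beta>"
    and support_min: "\<And>i j. b i j \<noteq> 0 \<Longrightarrow> \<mu> \<le> \<alpha> * real i + \<beta> * real j"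
    and support_tie: "\<And>i j. b i j \<noteq> 0 \<Longrightarrow> \<alpha> * real i + \<beta> * real j = \<mu> \<Longrightarrow> i0 \<le> i"
    and "u \<in> newton_polygon b" "\<alpha> * fst u + \<beta> * snd u = \<mu>"
  shows "real i0 \<le> fst u"
proof -
  obtain g where "0 < g" and gap: "\<And>i j. \<mu> < \<alpha> * real i + \<beta> * real j \<Longrightarrow> \<mu> + g \<le> \<alpha> * real i + \<beta> * real j"
    using weighted_nat_sums_gap[OF assms(1,2), of \<mu>] by blast
  \<comment> \<open>thanks to the gap, this half-plane tilted slightly away from the level line still contains the support\<close>
  define K where "K = real i0 / g"
  have "newton_polygon b \<subseteq> {u. K * \<mu> + real i0 \<le> (K * \<alpha> + 1) * fst u + (K * \<beta>) * snd u}"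
  proof (rule newton_polygon_subset_halfspace)
    show "0 \<le> K * \<alpha> + 1" "0 \<le> K * \<beta>"
      using assms(1,2) \<open>0 < g\<close> by (simp_all add: K_def)
    fix i j assume ij: "b i j \<noteq> 0"
    have "K * \<mu> + real i0 \<le> K * (\<alpha> * real i + \<beta> * real j) + real i"
    proof (cases "\<alpha> * real i + \<beta> * real j = \<mu>")
      case True
      then show ?thesis using support_tie[OF ij] by simp
    next
      case False
      then have "K * (\<mu> + g) \<le> K * (\<alpha> * real i + \<beta> * real j)"
        using gap support_min[OF ij] \<open>0 < g\<close> by (intro mult_left_mono) (auto simp: K_def)
      then show ?thesis using \<open>0 < g\<close> by (simp add: K_def distrib_left)
    qed
    then show "K * \<mu> + real i0 \<le> (K * \<alpha> + 1) * real i + K * \<beta> * real j"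
      by (simp add: algebra_simps)
  qed
  then have "K * \<mu> + real i0 \<le> K * (\<alpha> * fst u + \<beta> * snd u) + fst u"
    using \<open>u \<in> newton_polygon b\<close> by (force simp: algebra_simps)
  with \<open>\<alpha> * fst u + \<beta> * snd u = \<mu>\<close> show ?thesis
    by simp
qed

lemma newton_polygon_lex_minimal_support_extreme:
  fixes \<alpha> \<beta> \<mu> :: real
  assumes "0 < \<alpha>" "0 < \<beta>"
    and support_min: "\<And>i j. b i j \<noteq> 0 \<Longrightarrow> \<mu> \<le> \<alpha> * real i + \<beta> * real j"
    and "b ie je \<noteq> 0" "\<alpha> * real ie + \<beta> * real je = \<mu>"
    and support_tie: "\<And>i j. b i j \<noteq> 0 \<Longrightarrow> \<alpha> * real i + \<beta> * real j = \<mu> \<Longrightarrow> ie \<le> i"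
  shows "(real ie, real je) extreme_point_of newton_polygon b"
proof (rule extreme_point_of_lex_minimizer[where \<alpha> = \<alpha>])
  show "(real ie, real je) \<in> newton_polygon b"
    by (rule support_in_newton_polygon[where b = b]) fact
  fix u assume u: "u \<in> newton_polygon b"
  have "newton_polygon b \<subseteq> {u. \<mu> \<le> \<alpha> * fst u + \<beta> * snd u}"
    using assms(1,2) support_min by (intro newton_polygon_subset_halfspace) auto
  with u assms(5) show "\<alpha> * fst (real ie, real je) + \<beta> * snd (real ie, real je) \<le> \<alpha> * fst u + \<beta> * snd u"
    by auto
  assume "\<alpha> * fst u + \<beta> * snd u = \<alpha> * fst (real ie, real je) + \<beta> * snd (real ie, real je)"
  then have "\<alpha> * fst u + \<beta> * snd u = \<mu>"
    using assms(5) by simp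
  then show "fst (real ie, real je) \<le> fst u"
    using newton_polygon_level_line_bound[OF assms(1,2) support_min support_tie u] by simp
qed (use assms(2) in simp)

lemma newton_polygon_extreme_point_below:
  fixes \<alpha> \<beta> :: real
  assumes "0 < \<alpha>" "0 < \<beta>" and "b i0 j0 \<noteq> 0"
  shows "\<exists>v. v extreme_point_of newton_polygon b \<and>
             \<alpha> * fst v + \<beta> * snd v \<le> \<alpha> * real i0 + \<beta> * real j0"
proof -
  obtain \<mu> where "\<mu> \<le> \<alpha> * real i0 + \<beta> * real j0"
    and support_min: "\<forall>i j. b i j \<noteq> 0 \<longrightarrow> \<mu> \<le> \<alpha> * real i + \<beta> * real j"
    and attained: "\<exists>i j. b i j \<noteq> 0 \<and> \<alpha> * real i + \<beta> * real j = \<mu>"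
    using support_weighted_minimum[where b = b, OF assms] by blast
  define ie where "ie = (LEAST i. \<exists>j. b i j \<noteq> 0 \<and> \<alpha> * real i + \<beta> * real j = \<mu>)"
  obtain je where "b ie je \<noteq> 0" "\<alpha> * real ie + \<beta> * real je = \<mu>"
    using LeastI_ex[OF attained] unfolding ie_def by blast
  moreover have "ie \<le> i" if "b i j \<noteq> 0" "\<alpha> * real i + \<beta> * real j = \<mu>" for i j
    unfolding ie_def using that by (intro Least_le) blast
  ultimately have "(real ie, real je) extreme_point_of newton_polygon b"
    using assms(1,2) support_min
    by (intro newton_polygon_lex_minimal_support_extreme[where \<alpha> = \<alpha> and \<beta> = \<beta> and \<mu> = \<mu>]) auto
  with \<open>\<alpha> * real ie + \<beta> * real je = \<mu>\<close> \<open>\<mu> \<le> \<alpha> * real i0 + \<beta> * real j0\<close> show ?thesis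
    by force
qed

lemma extreme_point_newton_polygon_lowest:
  assumes "v extreme_point_of newton_polygon b" "u \<in> newton_polygon b" "fst u = fst v"
  shows "snd v \<le> snd u"
proof (rule ccontr)
  assume "\<not> snd v \<le> snd u"
  define h where "h = snd v - snd u"
  have "0 < h"
    using \<open>\<not> snd v \<le> snd u\<close> by (simp add: h_def)
  have "u + (0, 2 * h) \<in> newton_polygon b"
    using assms(2) \<open>0 < h\<close> by (intro newton_polygon_upward_closed) auto
  moreover have "v \<in> open_segment u (u + (0, 2 * h))"
    unfolding in_segment
  proof (intro conjI exI[of _ "1 / 2"])
    show "u \<noteq> u + (0, 2 * h)"
      using \<open>0 < h\<close> by (simp add: prod_eq_iff)
    show "v = (1 - 1 / 2) *\<^sub>R u + (1 / 2) *\<^sub>R (u + (0, 2 * h))"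
      using assms(3) by (simp add: prod_eq_iff h_def algebra_simps)
  qed auto
  ultimately show False
    using assms(1,2) unfolding extreme_point_of_def by blast
qed

lemma extreme_point_newton_polygon_below_chord:
  assumes "v extreme_point_of newton_polygon b" "x \<in> newton_polygon b" "y \<in> newton_polygon b"
    and "fst x < fst v" "fst v < fst y"
  shows "(fst y - fst x) * snd v \<le> (fst y - fst v) * snd x + (fst v - fst x) * snd y"
proof -
  define t where "t = (fst v - fst x) / (fst y - fst x)"
  have "0 < t" "t < 1"
    using assms(4,5) by (simp_all add: t_def divide_simps)
  have "convex (newton_polygon b)"
    unfolding newton_polygon_def by (rule convex_convex_hull)
  then have "(1 - t) *\<^sub>R x + t *\<^sub>R y \<in> newton_polygon b"
    using assms(2,3) \<open>0 < t\<close> \<open>t < 1\<close> by (intro convexD) auto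
  moreover have t_scaled: "t * (fst y - fst x) = fst v - fst x"
    using assms(4,5) by (simp add: t_def)
  then have "fst ((1 - t) *\<^sub>R x + t *\<^sub>R y) = fst v"
    by (simp add: algebra_simps)
  ultimately have "snd v \<le> snd ((1 - t) *\<^sub>R x + t *\<^sub>R y)"
    by (rule extreme_point_newton_polygon_lowest[OF assms(1)])
  then have "(fst y - fst x) * snd v \<le> (fst y - fst x) * ((1 - t) * snd x + t * snd y)"
    using assms(4,5) by (intro mult_left_mono) auto
  also have "\<dots> = ((1 - t) * (fst y - fst x)) * snd x + (t * (fst y - fst x)) * snd y"
    by (simp add: algebra_simps)
  also have "(1 - t) * (fst y - fst x) = fst y - fst v"
    using t_scaled by (simp add: left_diff_distrib)
  also note t_scaled
  finally show ?thesis .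
qed

section \<open>The weighted order of the support\<close>

lemma weighted_order_min_at_corner:
  fixes \<alpha> \<beta> \<Lambda> \<gamma> d l \<delta> i j :: real
  assumes "0 < \<alpha>" "\<beta> < l * \<alpha>" and corner_value: "\<alpha> * \<gamma> + \<beta> * d = \<Lambda>"
    and corner: "l * \<delta> < \<gamma> + l * d" and "d \<le> j" and edge: "\<Lambda> \<le> \<alpha> * i + \<beta> * j"
  shows "l * \<delta> < i + l * j"
proof -
  have "\<alpha> * (\<gamma> + l * d) = \<Lambda> + (l * \<alpha> - \<beta>) * d"
    by (simp add: corner_value[symmetric] algebra_simps)
  also have "\<dots> \<le> (\<alpha> * i + \<beta> * j) + (l * \<alpha> - \<beta>) * j"
    using edge assms(2) \<open>d \<le> j\<close> by (intro add_mono mult_left_mono) auto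
  also have "\<dots> = \<alpha> * (i + l * j)"
    by (simp add: algebra_simps)
  finally have "\<gamma> + l * d \<le> i + l * j"
    using \<open>0 < \<alpha>\<close> by simp
  with corner show ?thesis
    by simp
qed

lemma weighted_order_min_at_intercept:
  fixes \<alpha> \<beta> \<Lambda> \<gamma> d l \<delta> i j :: real
  assumes "0 < \<alpha>" "0 < \<beta>" "0 < l" "l * \<alpha> \<le> \<beta>" and corner_value: "\<alpha> * \<gamma> + \<beta> * d = \<Lambda>"
    and intercept: "\<delta> * \<beta> \<le> \<Lambda>" and corner: "l * \<delta> < \<gamma> + l * d"
    and "0 \<le> i" and edge: "\<Lambda> \<le> \<alpha> * i + \<beta> * j" and "j < \<delta>"
  shows "l * \<delta> < i + l * j"
proof (rule ccontr)
  assume "\<not> l * \<delta> < i + l * j"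
  then have "\<beta> * i + l * \<beta> * j \<le> l * \<delta> * \<beta>"
    using \<open>0 < \<beta>\<close> mult_left_mono[of "i + l * j" "l * \<delta>" \<beta>] by (simp add: algebra_simps)
  moreover have "l * \<alpha> * i \<le> \<beta> * i"
    using \<open>l * \<alpha> \<le> \<beta>\<close> \<open>0 \<le> i\<close> by (rule mult_right_mono)
  moreover have "l * \<Lambda> \<le> l * \<alpha> * i + l * \<beta> * j"
    using edge \<open>0 < l\<close> by (simp add: distrib_left[symmetric] mult.assoc)
  moreover have "l * \<delta> * \<beta> \<le> l * \<Lambda>"
    using intercept \<open>0 < l\<close> by (simp add: mult.assoc)
  \<comment> \<open>all four inequalities are now equalities: the weight is parallel to the edge, so the corner value is attained\<close>
  ultimately have "l * \<alpha> * i = \<beta> * i" "l * \<Lambda> = l * \<alpha> * i + l * \<beta> * j" "l * \<delta> * \<beta> = l * \<Lambda>"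
    by linarith+
  then have "l * (\<alpha> * i) = l * (\<beta> * (\<delta> - j))" "l * (\<delta> * \<beta>) = l * \<Lambda>"
    by (simp_all add: algebra_simps)
  then have "\<alpha> * i = \<beta> * (\<delta> - j)" "\<delta> * \<beta> = \<Lambda>"
    using \<open>0 < l\<close> by simp_all
  then have "0 < \<alpha> * i"
    using \<open>0 < \<beta>\<close> \<open>j < \<delta>\<close> by simp
  then have "0 < i"
    using \<open>0 < \<alpha>\<close> by (simp add: zero_less_mult_iff)
  with \<open>l * \<alpha> * i = \<beta> * i\<close> have "l * \<alpha> = \<beta>"
    by simp
  then have "\<beta> * (\<gamma> + l * d) = l * \<Lambda>"
    by (simp add: corner_value[symmetric] algebra_simps)
  also have "\<dots> = \<beta> * (l * \<delta>)"
    by (simp add: \<open>\<delta> * \<beta> = \<Lambda>\<close>[symmetric] algebra_simps)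
  finally show False
    using corner \<open>0 < \<beta>\<close> by simp
qed

lemma weighted_order_above_edge:
  fixes l \<delta> \<gamma> d n' m' i j :: real
  assumes "n' < \<gamma>" "d < m'" and "0 < l"
    and intercept: "\<delta> * (\<gamma> - n') \<le> (m' - d) * \<gamma> + (\<gamma> - n') * d"
    and corner: "l * \<delta> < \<gamma> + l * d"
    and "0 \<le> i" "d \<le> j" and edge: "(m' - d) * \<gamma> + (\<gamma> - n') * d \<le> (m' - d) * i + (\<gamma> - n') * j"
    and "j < \<delta>"
  shows "l * \<delta> < i + l * j"
proof (cases "l * (m' - d) \<le> \<gamma> - n'")
  case True
  show ?thesis
    by (rule weighted_order_min_at_intercept[OF _ _ \<open>0 < l\<close> True refl intercept corner \<open>0 \<le> i\<close> edge \<open>j < \<delta>\<close>])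
       (use assms(1,2) in simp_all)
next
  case False
  show ?thesis
    by (rule weighted_order_min_at_corner[OF _ _ refl corner \<open>d \<le> j\<close> edge])
       (use assms(2) False in simp_all)
qed

locale newton_vertex_chain =
  fixes b :: "nat \<Rightarrow> nat \<Rightarrow> complex" and n m :: "nat \<Rightarrow> nat" and s :: nat
  assumes vertices: "{v. v extreme_point_of newton_polygon b} =
                     (\<lambda>k. (real (n k), real (m k))) ` {1..s}"
    and n_incr: "\<forall>i\<in>{1..s}. \<forall>j\<in>{1..s}. i < j \<longrightarrow> n i < n j"
    and m_decr: "\<forall>i\<in>{1..s}. \<forall>j\<in>{1..s}. i < j \<longrightarrow> m j < m i"
    and s_gt: "1 < s"
begin

lemma extreme_point_iff_vertex:
  "v extreme_point_of newton_polygon b \<longleftrightarrow> (\<exists>k\<in>{1..s}. v = (real (n k), real (m k)))"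
  using vertices by blast

lemma vertex_extreme_point: "k \<in> {1..s} \<Longrightarrow> (real (n k), real (m k)) extreme_point_of newton_polygon b"
  using extreme_point_iff_vertex by blast

lemma vertex_in_newton_polygon: "k \<in> {1..s} \<Longrightarrow> (real (n k), real (m k)) \<in> newton_polygon b"
  using vertex_extreme_point unfolding extreme_point_of_def by blast

lemma last_edge_slopes: "n (s - 1) < n s" "m s < m (s - 1)"
  using n_incr m_decr s_gt by auto

lemma support_above_last_vertex:
  assumes "b i j \<noteq> 0"
  shows "m s \<le> j"
proof (rule ccontr)
  assume "\<not> m s \<le> j"
  define B where "B = real (n s) + real i + 1"
  obtain k where k: "k \<in> {1..s}" and below: "real (n k) + B * real (m k) \<le> real i + B * real j"
    using newton_polygon_extreme_point_below[of 1 B b i j] assms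
    by (auto simp: B_def extreme_point_iff_vertex)
  have "m s \<le> m k"
    using m_decr k by (cases "k = s") (auto intro!: less_imp_le)
  then have "B * (real j + 1) \<le> B * real (m k)"
    using \<open>\<not> m s \<le> j\<close> by (intro mult_left_mono) (auto simp: B_def)
  with below show False
    by (simp add: B_def algebra_simps)
qed

definition last_edge_form :: "real \<Rightarrow> real \<Rightarrow> real" where
  "last_edge_form x y = (real (m (s - 1)) - real (m s)) * x + (real (n s) - real (n (s - 1))) * y"

lemma vertex_above_last_edge:
  assumes "k \<in> {1..s}"
  shows "last_edge_form (n s) (m s) \<le> last_edge_form (n k) (m k)"
proof -
  consider "k = s" | "k = s - 1" | "k < s - 1"
    using assms by fastforce
  then show ?thesis
  proof cases
    case 3
    then have "n k < n (s - 1)"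
      using assms n_incr s_gt by auto
    then have "(real (n s) - real (n k)) * real (m (s - 1))
        \<le> (real (n s) - real (n (s - 1))) * real (m k) + (real (n (s - 1)) - real (n k)) * real (m s)"
      using extreme_point_newton_polygon_below_chord[OF vertex_extreme_point[of "s - 1"]
          vertex_in_newton_polygon[OF assms] vertex_in_newton_polygon[of s]] s_gt last_edge_slopes
      by simp
    moreover have "last_edge_form (n k) (m k) - last_edge_form (n s) (m s)
        = (real (n s) - real (n (s - 1))) * real (m k) + (real (n (s - 1)) - real (n k)) * real (m s)
          - (real (n s) - real (n k)) * real (m (s - 1))"
      by (simp add: last_edge_form_def algebra_simps)
    ultimately show ?thesis
      by linarith
  qed (simp_all add: last_edge_form_def algebra_simps)
qed

lemma support_above_last_edge:
  assumes "b i j \<noteq> 0"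
  shows "last_edge_form (n s) (m s) \<le> last_edge_form i j"
proof -
  obtain v where "v extreme_point_of newton_polygon b" "last_edge_form (fst v) (snd v) \<le> last_edge_form i j"
    using newton_polygon_extreme_point_below[of "real (m (s - 1)) - real (m s)"
        "real (n s) - real (n (s - 1))" b i j] assms last_edge_slopes
    unfolding last_edge_form_def by auto
  then obtain k where "k \<in> {1..s}" "last_edge_form (n k) (m k) \<le> last_edge_form i j"
    unfolding extreme_point_iff_vertex by auto
  with vertex_above_last_edge show ?thesis
    by force
qed

lemma intercept_weight_below_last_vertex:
  fixes \<delta> :: nat and l :: real
  assumes l_cond: "(\<delta> \<le> m s \<longrightarrow> l > 0) \<and>
                   (\<delta> > m s \<longrightarrow> 0 < l \<and> l < real (n s) / (real \<delta> - real (m s)))"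
  shows "l * real \<delta> < real (n s) + l * real (m s)"
proof (cases "\<delta> \<le> m s")
  case True
  then have "l * real \<delta> \<le> l * real (m s)"
    using l_cond by simp
  moreover have "0 < real (n s)"
    using last_edge_slopes by simp
  ultimately show ?thesis
    by linarith
next
  case False
  then have "l * (real \<delta> - real (m s)) < real (n s)"
    using l_cond by (simp add: pos_less_divide_eq)
  then show ?thesis
    by (simp add: algebra_simps)
qed

lemma intercept_below_last_edge:
  assumes "y \<le> y_intercept (real (n (s - 1)), real (m (s - 1))) (real (n s), real (m s))"
  shows "y * (real (n s) - real (n (s - 1))) \<le> last_edge_form (n s) (m s)"
proof -
  have slopes: "real (n (s - 1)) < real (n s)" "real (m s) < real (m (s - 1))"
    using last_edge_slopes by simp_all
  have "y * (real (n s) - real (n (s - 1)))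
      \<le> y_intercept (real (n (s - 1)), real (m (s - 1))) (real (n s), real (m s))
          * (real (n s) - real (n (s - 1)))"
    using assms slopes by (intro mult_right_mono) auto
  also have "\<dots> = last_edge_form (n s) (m s)"
    using slopes by (simp add: last_edge_form_def y_intercept_def divide_simps) (simp add: algebra_simps)
  finally show ?thesis .
qed

lemma support_weighted_order:
  fixes \<delta> :: nat and l :: real
  assumes case2: "real \<delta> \<le> y_intercept (real (n (s - 1)), real (m (s - 1))) (real (n s), real (m s))"
    and l_cond: "(\<delta> \<le> m s \<longrightarrow> l > 0) \<and>
                 (\<delta> > m s \<longrightarrow> 0 < l \<and> l < real (n s) / (real \<delta> - real (m s)))"
    and "b i j \<noteq> 0" "j < \<delta>"
  shows "l * real \<delta> < real i + l * real j"
proof -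
  have "0 < l"
    using l_cond by (cases "\<delta> \<le> m s") auto
  show ?thesis
    by (rule weighted_order_above_edge[OF _ _ \<open>0 < l\<close>
          intercept_below_last_edge[OF case2, unfolded last_edge_form_def]
          intercept_weight_below_last_vertex[OF l_cond] of_nat_0_le_iff _
          support_above_last_edge[OF \<open>b i j \<noteq> 0\<close>, unfolded last_edge_form_def]])
       (use last_edge_slopes support_above_last_vertex[OF \<open>b i j \<noteq> 0\<close>] \<open>j < \<delta>\<close> in simp_all)
qed

end

section \<open>Estimates on the region U\<close>

lemma leading_term_pointwise_bounds:
  fixes a z w :: complex and C :: real
  assumes err: "norm (w - a * z ^ \<delta>) \<le> C * norm z ^ (\<delta> + 1)" and "2 \<le> \<delta>"
    and "0 < norm z" "norm z < 1" "\<bar>C\<bar> * norm z \<le> norm a / 2" "norm a * norm z < 1 / 2"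
  shows "norm a / 2 * norm z ^ \<delta> \<le> norm w \<and> norm w < norm z"
proof -
  define t where "t = norm z"
  have "norm (w - a * z ^ \<delta>) \<le> \<bar>C\<bar> * t * t ^ \<delta>"
    using err mult_right_mono[OF abs_ge_self[of C], of "t ^ (\<delta> + 1)"] by (simp add: t_def mult.assoc)
  also have "\<dots> \<le> norm a / 2 * t ^ \<delta>"
    using assms(3,5) by (intro mult_right_mono) (auto simp: t_def)
  finally have err': "norm (w - a * z ^ \<delta>) \<le> norm a / 2 * t ^ \<delta>" .
  have lead: "norm (a * z ^ \<delta>) = norm a * t ^ \<delta>"
    by (simp add: t_def norm_mult norm_power)
  have lower: "norm a / 2 * t ^ \<delta> \<le> norm w"
    using norm_triangle_ineq2[of "a * z ^ \<delta>" "a * z ^ \<delta> - w"] err' lead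
    by (simp add: norm_minus_commute)
  have "norm w \<le> norm (a * z ^ \<delta>) + norm (w - a * z ^ \<delta>)"
    using norm_triangle_ineq[of "a * z ^ \<delta>" "w - a * z ^ \<delta>"] by simp
  also have "\<dots> \<le> 2 * norm a * t ^ \<delta>"
    using err' lead norm_ge_zero[of "w - a * z ^ \<delta>"] by linarith
  also have "\<dots> \<le> (2 * norm a * t) * t"
    using power_decreasing[OF \<open>2 \<le> \<delta>\<close>, of t] assms(3,4)
    by (simp add: t_def power2_eq_square mult_left_mono mult.assoc)
  also have "\<dots> < 1 * t"
    using assms(3,6) by (intro mult_strict_right_mono) (auto simp: t_def)
  finally show ?thesis
    using lower by (simp add: t_def)
qed

lemma leading_term_bounds:
  fixes p :: "complex \<Rightarrow> complex"
  assumes lead: "\<exists>C \<rho>. \<rho> > 0 \<and> (\<forall>z. norm z < \<rho> \<longrightarrow> norm (p z - a * z ^ \<delta>) \<le> C * norm z ^ (\<delta> + 1))"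
    and "a \<noteq> 0" "2 \<le> \<delta>"
  shows "\<exists>\<rho>>0. \<forall>z. 0 < norm z \<longrightarrow> norm z < \<rho> \<longrightarrow>
           norm a / 2 * norm z ^ \<delta> \<le> norm (p z) \<and> norm (p z) < norm z"
proof -
  obtain C \<rho>0 where "0 < \<rho>0" and C: "\<And>z. norm z < \<rho>0 \<Longrightarrow> norm (p z - a * z ^ \<delta>) \<le> C * norm z ^ (\<delta> + 1)"
    using lead by blast
  define \<rho> where "\<rho> = min \<rho>0 (min 1 (min (norm a / (2 * (\<bar>C\<bar> + 1))) (1 / (2 * norm a))))"
  have "0 < \<rho>"
    using \<open>0 < \<rho>0\<close> \<open>a \<noteq> 0\<close> by (simp add: \<rho>_def)
  moreover have "norm a / 2 * norm z ^ \<delta> \<le> norm (p z) \<and> norm (p z) < norm z"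
    if "0 < norm z" "norm z < \<rho>" for z
  proof (rule leading_term_pointwise_bounds[OF C \<open>2 \<le> \<delta>\<close> \<open>0 < norm z\<close>])
    have "norm z < \<rho>0" "norm z < 1" "norm z < norm a / (2 * (\<bar>C\<bar> + 1))" "norm z < 1 / (2 * norm a)"
      using that by (simp_all add: \<rho>_def)
    then show "norm z < \<rho>0" "norm z < 1" "norm a * norm z < 1 / 2"
      using \<open>a \<noteq> 0\<close> by (simp_all add: field_simps)
    have "\<bar>C\<bar> * norm z \<le> (\<bar>C\<bar> + 1) * norm z"
      by (simp add: algebra_simps)
    also have "\<dots> \<le> (\<bar>C\<bar> + 1) * (norm a / (2 * (\<bar>C\<bar> + 1)))"
      using \<open>norm z < norm a / (2 * (\<bar>C\<bar> + 1))\<close> by (intro mult_left_mono) auto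
    also have "\<dots> = norm a / 2"
      by (simp add: field_simps add_nonneg_eq_0_iff)
    finally show "\<bar>C\<bar> * norm z \<le> norm a / 2" .
  qed
  ultimately show ?thesis
    by blast
qed

lemma monomial_bound_high_w_degree:
  fixes t u r \<rho> l :: real
  assumes "0 < t" "t \<le> \<rho>" "\<rho> \<le> 1" "0 \<le> u" "u \<le> r * t powr l" "0 \<le> r" "r \<le> \<rho>" "0 \<le> l"
    and "\<delta> \<le> j"
  shows "t ^ i * u ^ j * \<rho> ^ (M + \<delta>) \<le> \<rho> ^ (i + j) * (r ^ \<delta> * t powr (l * real \<delta>))"
proof -
  have "t powr l \<le> 1"
    using assms by (intro powr_le1) auto
  then have "u \<le> \<rho>"
    using assms by (smt (verit) mult_left_le)
  have "u ^ \<delta> \<le> (r * t powr l) ^ \<delta>"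
    using assms by (intro power_mono) auto
  also have "\<dots> = r ^ \<delta> * t powr (l * real \<delta>)"
    using \<open>0 < t\<close> by (simp add: power_mult_distrib powr_power mult.commute)
  finally have u_lead: "u ^ \<delta> \<le> r ^ \<delta> * t powr (l * real \<delta>)" .
  have "t ^ i * u ^ j * \<rho> ^ (M + \<delta>) = (t ^ i * u ^ (j - \<delta>) * \<rho> ^ M) * (u ^ \<delta> * \<rho> ^ \<delta>)"
    using \<open>\<delta> \<le> j\<close> by (simp add: power_add[symmetric] algebra_simps)
  also have "\<dots> \<le> (\<rho> ^ i * \<rho> ^ (j - \<delta>) * 1) * ((r ^ \<delta> * t powr (l * real \<delta>)) * \<rho> ^ \<delta>)"
    using assms \<open>u \<le> \<rho>\<close> u_lead
    by (intro mult_mono power_mono power_le_one) auto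
  also have "\<dots> = \<rho> ^ (i + j) * (r ^ \<delta> * t powr (l * real \<delta>))"
    using \<open>\<delta> \<le> j\<close> by (simp add: power_add[symmetric] algebra_simps)
  finally show ?thesis .
qed

lemma monomial_bound_high_z_degree:
  fixes t u \<rho> l :: real
  assumes "0 < t" "t \<le> \<rho>" "\<rho> \<le> 1" "0 \<le> u" "u \<le> \<rho>"
    and "l * real \<delta> + 1 \<le> real M" "M \<le> i"
  shows "t ^ i * u ^ j * \<rho> ^ (M + \<delta>) \<le> \<rho> ^ (i + j) * (t * t powr (l * real \<delta>))"
proof -
  have "t ^ M = t powr real M"
    using \<open>0 < t\<close> by (simp add: powr_realpow)
  also have "\<dots> \<le> t powr (l * real \<delta> + 1)"
    using assms by (intro powr_mono') auto
  also have "\<dots> = t * t powr (l * real \<delta>)"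
    using \<open>0 < t\<close> by (simp add: powr_add)
  finally have t_lead: "t ^ M \<le> t * t powr (l * real \<delta>)" .
  have "t ^ i * u ^ j * \<rho> ^ (M + \<delta>) = (t ^ (i - M) * u ^ j * \<rho> ^ \<delta>) * (t ^ M * \<rho> ^ M)"
    using \<open>M \<le> i\<close> by (simp add: power_add[symmetric] algebra_simps)
  also have "\<dots> \<le> (\<rho> ^ (i - M) * \<rho> ^ j * 1) * ((t * t powr (l * real \<delta>)) * \<rho> ^ M)"
    using assms t_lead by (intro mult_mono power_mono power_le_one) auto
  also have "\<dots> = \<rho> ^ (i + j) * (t * t powr (l * real \<delta>))"
    using \<open>M \<le> i\<close> by (simp add: power_add[symmetric] algebra_simps)
  finally show ?thesis .
qed

lemma monomial_bound_low_degrees: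
  fixes t u \<rho> l \<eta> :: real
  assumes "0 < t" "t \<le> \<rho>" "\<rho> \<le> 1" "0 \<le> u" "u \<le> t powr l"
    and "i < M" "j < \<delta>" and gap: "l * real \<delta> + \<eta> \<le> real i + l * real j"
  shows "t ^ i * u ^ j * \<rho> ^ (M + \<delta>) \<le> \<rho> ^ (i + j) * (t powr \<eta> * t powr (l * real \<delta>))"
proof -
  have "t ^ i * u ^ j \<le> t ^ i * (t powr l) ^ j"
    using assms by (intro mult_left_mono power_mono) auto
  also have "\<dots> = t powr (real i + l * real j)"
    using \<open>0 < t\<close> by (simp add: powr_add powr_realpow powr_power mult.commute)
  also have "\<dots> \<le> t powr (l * real \<delta> + \<eta>)"
    using assms by (intro powr_mono') auto
  also have "\<dots> = t powr \<eta> * t powr (l * real \<delta>)"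
    using \<open>0 < t\<close> by (simp add: powr_add mult.commute)
  finally have "t ^ i * u ^ j \<le> t powr \<eta> * t powr (l * real \<delta>)" .
  moreover have "\<rho> ^ (M + \<delta>) \<le> \<rho> ^ (i + j)"
    using assms by (intro power_decreasing) auto
  ultimately have "t ^ i * u ^ j * \<rho> ^ (M + \<delta>) \<le> (t powr \<eta> * t powr (l * real \<delta>)) * \<rho> ^ (i + j)"
    by (rule mult_mono) (use assms in auto)
  then show ?thesis
    by (simp add: mult.commute)
qed

lemma monomial_weighted_bound:
  fixes t u r \<rho> l \<eta> :: real
  assumes "0 < t" "t \<le> \<rho>" "\<rho> \<le> 1" "0 \<le> u" "u \<le> r * t powr l" "0 < r" "r \<le> \<rho>" "0 \<le> l"
    and "l * real \<delta> + 1 \<le> real M"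
    and gap: "j < \<delta> \<Longrightarrow> i < M \<Longrightarrow> l * real \<delta> + \<eta> \<le> real i + l * real j"
  shows "t ^ i * u ^ j * \<rho> ^ (M + \<delta>) \<le> \<rho> ^ (i + j) * ((r ^ \<delta> + t + t powr \<eta>) * t powr (l * real \<delta>))"
proof -
  have "r * t powr l \<le> t powr l"
    using assms by (intro mult_left_le_one_le) auto
  then have "u \<le> t powr l"
    using assms by linarith
  have "t powr l \<le> 1"
    using assms by (intro powr_le1) auto
  then have "r * t powr l \<le> r"
    using assms by (intro mult_right_le_one_le) auto
  then have "u \<le> \<rho>"
    using assms by linarith
  have enlarge: "\<rho> ^ (i + j) * (X * t powr (l * real \<delta>))
      \<le> \<rho> ^ (i + j) * ((r ^ \<delta> + t + t powr \<eta>) * t powr (l * real \<delta>))"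
    if "X \<le> r ^ \<delta> + t + t powr \<eta>" for X
    using that assms by (intro mult_left_mono mult_right_mono) auto
  consider "\<delta> \<le> j" | "j < \<delta>" "M \<le> i" | "j < \<delta>" "i < M"
    by linarith
  then show ?thesis
  proof cases
    case 1
    show ?thesis
      using assms by (intro order_trans[OF monomial_bound_high_w_degree[OF assms(1-5) _ _ _ 1] enlarge]) auto
  next
    case 2
    show ?thesis
      using assms by (intro order_trans[OF monomial_bound_high_z_degree[OF assms(1-4) \<open>u \<le> \<rho>\<close> _ 2(2)] enlarge]) auto
  next
    case 3
    show ?thesis
      using assms by (intro order_trans[OF monomial_bound_low_degrees[OF assms(1-4) \<open>u \<le> t powr l\<close> 3(2,1) gap[OF 3]] enlarge]) auto
  qed
qed

lemma double_power_series_abs_summable: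
  fixes b :: "nat \<Rightarrow> nat \<Rightarrow> complex" and \<rho> :: real
  assumes "((\<lambda>(i, j). b i j * of_real \<rho> ^ i * of_real \<rho> ^ j) has_sum S) UNIV" "0 \<le> \<rho>"
  shows "(\<lambda>(i, j). norm (b i j) * \<rho> ^ (i + j)) summable_on UNIV"
proof -
  have "(\<lambda>(i, j). b i j * of_real \<rho> ^ i * of_real \<rho> ^ j) summable_on UNIV"
    using assms(1) by (rule has_sum_imp_summable)
  then have "(\<lambda>x. norm ((\<lambda>(i, j). b i j * of_real \<rho> ^ i * of_real \<rho> ^ j) x)) summable_on UNIV"
    using summable_on_iff_abs_summable_on_complex by blast
  moreover have "norm ((\<lambda>(i, j). b i j * of_real \<rho> ^ i * of_real \<rho> ^ j) x)
      = (\<lambda>(i, j). norm (b i j) * \<rho> ^ (i + j)) x" for x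
    using assms(2) by (cases x) (simp add: norm_mult norm_power power_add)
  ultimately show ?thesis
    by simp
qed

lemma weighted_order_uniform_gap:
  fixes l :: real
  assumes order: "\<And>i j. b i j \<noteq> 0 \<Longrightarrow> j < \<delta> \<Longrightarrow> l * real \<delta> < real i + l * real j"
  shows "\<exists>\<eta>>0. \<forall>i j. b i j \<noteq> 0 \<longrightarrow> j < \<delta> \<longrightarrow> i < M \<longrightarrow> l * real \<delta> + \<eta> \<le> real i + l * real j"
proof -
  have "finite {(i, j). i < M \<and> j < \<delta> \<and> b i j \<noteq> 0}"
    by (rule finite_subset[of _ "{..<M} \<times> {..<\<delta>}"]) auto
  then obtain \<eta> where "0 < \<eta>" and \<eta>: "\<forall>x\<in>{(i, j). i < M \<and> j < \<delta> \<and> b i j \<noteq> 0}.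
      0 < (\<lambda>(i, j). real i + l * real j - l * real \<delta>) x \<longrightarrow> \<eta> \<le> (\<lambda>(i, j). real i + l * real j - l * real \<delta>) x"
    using finite_positive_values_bounded_below by blast
  show ?thesis
    using \<open>0 < \<eta>\<close> \<eta> order by (intro exI[of _ \<eta>]) force
qed

lemma double_power_series_weighted_bound:
  fixes b :: "nat \<Rightarrow> nat \<Rightarrow> complex" and z w Q :: complex and \<rho> r l \<eta> :: real
  assumes "((\<lambda>(i, j). b i j * z ^ i * w ^ j) has_sum Q) UNIV"
    and G: "(\<lambda>(i, j). norm (b i j) * \<rho> ^ (i + j)) summable_on UNIV"
    and "0 < norm z" "norm z \<le> \<rho>" "\<rho> \<le> 1" "0 < r" "r \<le> \<rho>" "norm w \<le> r * norm z powr l" "0 \<le> l"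
    and "l * real \<delta> + 1 \<le> real M"
    and gap: "\<forall>i j. b i j \<noteq> 0 \<longrightarrow> j < \<delta> \<longrightarrow> i < M \<longrightarrow> l * real \<delta> + \<eta> \<le> real i + l * real j"
  shows "norm Q \<le> infsum (\<lambda>(i, j). norm (b i j) * \<rho> ^ (i + j)) UNIV / \<rho> ^ (M + \<delta>)
                    * (r ^ \<delta> + norm z + norm z powr \<eta>) * norm z powr (l * real \<delta>)"
proof -
  define G where "G = (\<lambda>(i, j). norm (b i j) * \<rho> ^ (i + j))"
  define E where "E = (r ^ \<delta> + norm z + norm z powr \<eta>) * norm z powr (l * real \<delta>)"
  define c where "c = E / \<rho> ^ (M + \<delta>)"
  have "0 < \<rho>"
    using assms(3,4) by linarith
  have "norm Q \<le> c * infsum G UNIV"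
  proof (rule norm_infsum_le)
    show "((\<lambda>x. c * G x) has_sum c * infsum G UNIV) UNIV"
      using G unfolding G_def by (intro has_sum_cmult_right has_sum_infsum)
    fix x :: "nat \<times> nat"
    obtain i j where x: "x = (i, j)"
      by fastforce
    show "norm ((\<lambda>(i, j). b i j * z ^ i * w ^ j) x) \<le> c * G x"
    proof (cases "b i j = 0")
      case False
      have "norm z ^ i * norm w ^ j * \<rho> ^ (M + \<delta>) \<le> \<rho> ^ (i + j) * E"
        unfolding E_def using assms(3-10) gap False by (intro monomial_weighted_bound) auto
      then have "norm (b i j) * (norm z ^ i * norm w ^ j * \<rho> ^ (M + \<delta>))
          \<le> norm (b i j) * (\<rho> ^ (i + j) * E)"
        by (rule mult_left_mono) simp
      then show ?thesis
        using \<open>0 < \<rho>\<close> by (simp add: x c_def G_def norm_mult norm_power field_simps)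
    qed (simp add: x G_def)
  qed fact
  then show ?thesis
    by (simp add: G_def E_def c_def field_simps)
qed

lemma power_series_weighted_estimate:
  fixes b :: "nat \<Rightarrow> nat \<Rightarrow> complex" and q :: "complex \<Rightarrow> complex \<Rightarrow> complex"
    and l :: real and \<delta> :: nat
  assumes q_series: "\<exists>\<rho>>0. \<forall>z w. norm z < \<rho> \<and> norm w < \<rho> \<longrightarrow>
                       ((\<lambda>(i, j). b i j * z ^ i * w ^ j) has_sum q z w) UNIV"
    and "0 \<le> l"
    and order: "\<And>i j. b i j \<noteq> 0 \<Longrightarrow> j < \<delta> \<Longrightarrow> l * real \<delta> < real i + l * real j"
  shows "\<exists>\<rho>>0. \<exists>K\<ge>0. \<exists>\<eta>>0. \<forall>z w r. 0 < norm z \<longrightarrow> norm z \<le> \<rho> \<longrightarrow> 0 < r \<longrightarrow> r \<le> \<rho> \<longrightarrow>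
           norm w \<le> r * norm z powr l \<longrightarrow>
           norm (q z w) \<le> K * (r ^ \<delta> + norm z + norm z powr \<eta>) * norm z powr (l * real \<delta>)"
proof -
  obtain \<rho>q where "0 < \<rho>q" and has_sum: "\<And>z w. norm z < \<rho>q \<Longrightarrow> norm w < \<rho>q \<Longrightarrow>
      ((\<lambda>(i, j). b i j * z ^ i * w ^ j) has_sum q z w) UNIV"
    using q_series by blast
  define \<rho> where "\<rho> = min (\<rho>q / 2) 1"
  have "0 < \<rho>" "\<rho> < \<rho>q" "\<rho> \<le> 1"
    using \<open>0 < \<rho>q\<close> by (auto simp: \<rho>_def)
  have G: "(\<lambda>(i, j). norm (b i j) * \<rho> ^ (i + j)) summable_on UNIV"
    using has_sum[of "of_real \<rho>" "of_real \<rho>"] \<open>0 < \<rho>\<close> \<open>\<rho> < \<rho>q\<close>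
    by (intro double_power_series_abs_summable) auto
  define M where "M = nat \<lceil>l * real \<delta>\<rceil> + 1"
  have M: "l * real \<delta> + 1 \<le> real M"
    unfolding M_def by linarith
  obtain \<eta> where "0 < \<eta>" and gap: "\<forall>i j. b i j \<noteq> 0 \<longrightarrow> j < \<delta> \<longrightarrow> i < M \<longrightarrow> l * real \<delta> + \<eta> \<le> real i + l * real j"
    using weighted_order_uniform_gap[OF order] by blast
  define K where "K = infsum (\<lambda>(i, j). norm (b i j) * \<rho> ^ (i + j)) UNIV / \<rho> ^ (M + \<delta>)"
  have "0 \<le> K"
    unfolding K_def using \<open>0 < \<rho>\<close> by (intro divide_nonneg_pos infsum_nonneg) auto
  moreover have "norm (q z w) \<le> K * (r ^ \<delta> + norm z + norm z powr \<eta>) * norm z powr (l * real \<delta>)"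
    if "0 < norm z" "norm z \<le> \<rho>" "0 < r" "r \<le> \<rho>" "norm w \<le> r * norm z powr l" for z w r
  proof -
    have "norm z powr l \<le> 1"
      using that \<open>\<rho> \<le> 1\<close> \<open>0 \<le> l\<close> by (intro powr_le1) auto
    then have "r * norm z powr l \<le> r"
      using that by (intro mult_right_le_one_le) auto
    then have "norm w < \<rho>q"
      using that \<open>\<rho> < \<rho>q\<close> by linarith
    then show ?thesis
      unfolding K_def using has_sum[of z w] that \<open>\<rho> < \<rho>q\<close> \<open>\<rho> \<le> 1\<close> \<open>0 \<le> l\<close> M gap
      by (intro double_power_series_weighted_bound[OF _ G]) auto
  qed
  ultimately show ?thesis
    using \<open>0 < \<rho>\<close> \<open>0 < \<eta>\<close> by blast
qed

lemma error_coefficient_small: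
  fixes K c r1 r2 t \<eta> :: real
  assumes "0 \<le> K" "2 \<le> \<delta>" "0 < r2" "r2 \<le> 1" "K * r2 < c / 2"
    and "K * (r1 + r1 powr \<eta>) \<le> r2 * c / 2" "0 < t" "t < r1" "0 \<le> \<eta>"
  shows "K * (r2 ^ \<delta> + t + t powr \<eta>) < r2 * c"
proof -
  have "K * r2 ^ \<delta> \<le> (K * r2) * r2"
    using power_decreasing[OF \<open>2 \<le> \<delta>\<close>, of r2] assms(1,3,4)
    by (simp add: power2_eq_square mult_left_mono mult.assoc)
  also have "\<dots> < c / 2 * r2"
    using assms(3,5) by (intro mult_strict_right_mono) auto
  finally have "K * r2 ^ \<delta> < r2 * c / 2"
    by (simp add: mult.commute)
  moreover have "K * (t + t powr \<eta>) \<le> K * (r1 + r1 powr \<eta>)"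
    using assms(1,7,8,9) by (intro mult_left_mono add_mono powr_mono2) auto
  ultimately show ?thesis
    using assms(6) by (simp add: distrib_left)
qed

lemma U_region_maps_into_itself:
  fixes p :: "complex \<Rightarrow> complex" and q :: "complex \<Rightarrow> complex \<Rightarrow> complex"
  assumes "0 < l" "2 \<le> \<delta>" "0 < A" "0 \<le> K" "0 \<le> \<eta>"
    and p_bounds: "\<forall>z. 0 < norm z \<longrightarrow> norm z < \<rho>p \<longrightarrow> A * norm z ^ \<delta> \<le> norm (p z) \<and> norm (p z) < norm z"
    and q_bound: "\<forall>z w r. 0 < norm z \<longrightarrow> norm z \<le> \<rho>q \<longrightarrow> 0 < r \<longrightarrow> r \<le> \<rho>q \<longrightarrow>
                   norm w \<le> r * norm z powr l \<longrightarrow>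
                   norm (q z w) \<le> K * (r ^ \<delta> + norm z + norm z powr \<eta>) * norm z powr (l * real \<delta>)"
    and r1: "0 < r1" "r1 \<le> \<rho>p" "r1 \<le> \<rho>q" "K * (r1 + r1 powr \<eta>) \<le> r2 * A powr l / 2"
    and r2: "0 < r2" "r2 \<le> \<rho>q" "r2 \<le> 1" "K * r2 < A powr l / 2"
  shows "(\<lambda>(z, w). (p z, q z w)) ` U_region l r1 r2 \<subseteq> U_region l r1 r2"
proof clarify
  fix z w assume "(z, w) \<in> U_region l r1 r2"
  then have "norm z < r1" and w: "norm w < r2 * norm z powr l"
    by (auto simp: U_region_def)
  define t where "t = norm z"
  have "0 < t"
    using w by (cases "z = 0") (auto simp: t_def)
  have p_lower: "A * t ^ \<delta> \<le> norm (p z)" and "norm (p z) < r1"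
    using p_bounds \<open>0 < t\<close> \<open>norm z < r1\<close> r1 by (auto simp: t_def)
  define T where "T = t powr (l * real \<delta>)"
  have "norm (q z w) \<le> K * (r2 ^ \<delta> + t + t powr \<eta>) * T"
    using q_bound \<open>0 < t\<close> \<open>norm z < r1\<close> r1 r2 w by (simp add: t_def T_def)
  also have "\<dots> < r2 * (A powr l * T)"
    using error_coefficient_small[OF \<open>0 \<le> K\<close> \<open>2 \<le> \<delta>\<close> r2(1,3,4) r1(4) \<open>0 < t\<close> _ \<open>0 \<le> \<eta>\<close>]
      \<open>norm z < r1\<close> \<open>0 < t\<close> by (simp add: t_def T_def mult.assoc mult_strict_right_mono)
  also have "A powr l * T = (A * t ^ \<delta>) powr l"
    using \<open>0 < t\<close> \<open>0 < A\<close> by (simp add: T_def powr_mult powr_realpow[symmetric] powr_powr mult.commute)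
  also have "\<dots> \<le> norm (p z) powr l"
    using p_lower \<open>0 < t\<close> \<open>0 < A\<close> \<open>0 < l\<close> by (intro powr_mono2) auto
  finally have "norm (q z w) < r2 * norm (p z) powr l"
    using r2 by (simp add: mult_left_mono)
  with \<open>norm (p z) < r1\<close> show "(p z, q z w) \<in> U_region l r1 r2"
    by (simp add: U_region_def)
qed

lemma exists_small_radius:
  fixes f :: "real \<Rightarrow> real"
  assumes "(f \<longlongrightarrow> 0) (at_right 0)" "0 < x" "0 < \<epsilon>"
  shows "\<exists>r. 0 < r \<and> r < \<epsilon> \<and> f r < x"
proof -
  have "\<forall>\<^sub>F r in at_right 0. r < \<epsilon>"
    using order_tendstoD(2)[OF tendsto_ident_at[of 0 "{0<..}"] \<open>0 < \<epsilon>\<close>] .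
  then have "\<forall>\<^sub>F r in at_right 0. 0 < r \<and> r < \<epsilon> \<and> f r < x"
    using order_tendstoD(2)[OF assms(1,2)] by (intro eventually_conj eventually_at_right_less)
  then show ?thesis
    using eventually_happens'[OF trivial_limit_at_right_real] by blast
qed

lemma U_region_invariant:
  fixes p :: "complex \<Rightarrow> complex" and q :: "complex \<Rightarrow> complex \<Rightarrow> complex"
  assumes "0 < l" "2 \<le> \<delta>" "0 < A"
    and p_bounds: "\<exists>\<rho>>0. \<forall>z. 0 < norm z \<longrightarrow> norm z < \<rho> \<longrightarrow>
                     A * norm z ^ \<delta> \<le> norm (p z) \<and> norm (p z) < norm z"
    and q_bound: "\<exists>\<rho>>0. \<exists>K\<ge>0. \<exists>\<eta>>0. \<forall>z w r. 0 < norm z \<longrightarrow> norm z \<le> \<rho> \<longrightarrow> 0 < r \<longrightarrow> r \<le> \<rho> \<longrightarrow>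
                    norm w \<le> r * norm z powr l \<longrightarrow>
                    norm (q z w) \<le> K * (r ^ \<delta> + norm z + norm z powr \<eta>) * norm z powr (l * real \<delta>)"
  shows "\<forall>\<epsilon>>0. \<exists>r1 r2. 0 < r1 \<and> r1 < \<epsilon> \<and> 0 < r2 \<and> r2 < \<epsilon> \<and>
           (\<lambda>(z, w). (p z, q z w)) ` U_region l r1 r2 \<subseteq> U_region l r1 r2"
proof (intro allI impI)
  fix \<epsilon> :: real assume "0 < \<epsilon>"
  obtain \<rho>p where "0 < \<rho>p" and p_bounds': "\<forall>z. 0 < norm z \<longrightarrow> norm z < \<rho>p \<longrightarrow>
      A * norm z ^ \<delta> \<le> norm (p z) \<and> norm (p z) < norm z"
    using p_bounds by blast
  obtain \<rho>q K \<eta> where "0 < \<rho>q" "0 \<le> K" "0 < \<eta>" and q_bound': "\<forall>z w r. 0 < norm z \<longrightarrow> norm z \<le> \<rho>q \<longrightarrow>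
      0 < r \<longrightarrow> r \<le> \<rho>q \<longrightarrow> norm w \<le> r * norm z powr l \<longrightarrow>
      norm (q z w) \<le> K * (r ^ \<delta> + norm z + norm z powr \<eta>) * norm z powr (l * real \<delta>)"
    using q_bound by blast
  have "((\<lambda>r. K * r) \<longlongrightarrow> 0) (at_right 0)"
    by (auto intro!: tendsto_eq_intros)
  then obtain r2 where r2: "0 < r2" "r2 < \<epsilon>" "r2 < \<rho>q" "r2 < 1" "K * r2 < A powr l / 2"
    using exists_small_radius[of _ "A powr l / 2" "min (min \<epsilon> \<rho>q) 1"] \<open>0 < \<epsilon>\<close> \<open>0 < \<rho>q\<close> \<open>0 < A\<close>
    by auto
  have "((\<lambda>r. r powr \<eta>) \<longlongrightarrow> 0) (at_right 0)"
    using \<open>0 < \<eta>\<close> eventually_at_right_less[of 0]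
    by (intro tendsto_zero_powrI tendsto_ident_at tendsto_const) (auto elim: eventually_mono)
  then have "((\<lambda>r. r + r powr \<eta>) \<longlongrightarrow> 0) (at_right 0)"
    using tendsto_add[OF tendsto_ident_at[of 0 "{0<..}"]] by fastforce
  then have "((\<lambda>r. K * (r + r powr \<eta>)) \<longlongrightarrow> 0) (at_right 0)"
    using tendsto_mult[OF tendsto_const[of K]] by fastforce
  then obtain r1 where r1: "0 < r1" "r1 < \<epsilon>" "r1 < \<rho>p" "r1 < \<rho>q" "K * (r1 + r1 powr \<eta>) < r2 * A powr l / 2"
    using exists_small_radius[of _ "r2 * A powr l / 2" "min (min \<epsilon> \<rho>p) \<rho>q"]
      \<open>0 < \<epsilon>\<close> \<open>0 < \<rho>p\<close> \<open>0 < \<rho>q\<close> \<open>0 < A\<close> \<open>0 < r2\<close>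
    by auto
  have "(\<lambda>(z, w). (p z, q z w)) ` U_region l r1 r2 \<subseteq> U_region l r1 r2"
    by (rule U_region_maps_into_itself[OF assms(1-3) \<open>0 \<le> K\<close> _ p_bounds' q_bound'])
       (use \<open>0 < \<eta>\<close> r1 r2 in auto)
  with r1 r2 show "\<exists>r1 r2. 0 < r1 \<and> r1 < \<epsilon> \<and> 0 < r2 \<and> r2 < \<epsilon> \<and>
           (\<lambda>(z, w). (p z, q z w)) ` U_region l r1 r2 \<subseteq> U_region l r1 r2"
    by blast
qed

theorem theorem2p2:
  fixes p :: "complex \<Rightarrow> complex" and q :: "complex \<Rightarrow> complex \<Rightarrow> complex"
    and b :: "nat \<Rightarrow> nat \<Rightarrow> complex" and a :: complex and \<delta> :: nat
    and n m :: "nat \<Rightarrow> nat" and s :: nat and l :: real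
  assumes p_hol: "\<exists>\<rho>>0. p holomorphic_on ball 0 \<rho>"
    and p_lead: "\<exists>C \<rho>. \<rho> > 0 \<and> (\<forall>z. norm z < \<rho> \<longrightarrow>
                   norm (p z - a * z ^ \<delta>) \<le> C * norm z ^ (\<delta> + 1))"
    and a_nz: "a \<noteq> 0" and \<delta>_ge: "\<delta> \<ge> 2"
    and q_series: "\<exists>\<rho>>0. \<forall>z w. norm z < \<rho> \<and> norm w < \<rho> \<longrightarrow>
                   ((\<lambda>(i, j). b i j * z ^ i * w ^ j) has_sum q z w) UNIV"
    and b00: "b 0 0 = 0" and b01: "b 0 1 = 0"
    and vertices: "{v. v extreme_point_of newton_polygon b} =
                   (\<lambda>k. (real (n k), real (m k))) ` {1..s}"
    and n_incr: "\<forall>i\<in>{1..s}. \<forall>j\<in>{1..s}. i < j \<longrightarrow> n i < n j"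
    and m_decr: "\<forall>i\<in>{1..s}. \<forall>j\<in>{1..s}. i < j \<longrightarrow> m j < m i"
    and s_gt: "s > 1"
    and case2: "real \<delta> \<le> y_intercept (real (n (s - 1)), real (m (s - 1))) (real (n s), real (m s))"
    and l_cond: "(\<delta> \<le> m s \<longrightarrow> l > 0) \<and>
                 (\<delta> > m s \<longrightarrow> 0 < l \<and> l < real (n s) / (real \<delta> - real (m s)))"
  shows "\<forall>\<epsilon>>0. \<exists>r1 r2. 0 < r1 \<and> r1 < \<epsilon> \<and> 0 < r2 \<and> r2 < \<epsilon> \<and>
           (\<lambda>(z, w). (p z, q z w)) ` U_region l r1 r2 \<subseteq> U_region l r1 r2"
proof -
  interpret newton_vertex_chain b n m s
    using vertices n_incr m_decr s_gt by unfold_locales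
  have "0 < l"
    using l_cond by (cases "\<delta> \<le> m s") auto
  have order: "\<And>i j. b i j \<noteq> 0 \<Longrightarrow> j < \<delta> \<Longrightarrow> l * real \<delta> < real i + l * real j"
    using support_weighted_order[OF case2 l_cond] .
  show ?thesis
    using a_nz \<open>0 < l\<close>
    by (intro U_region_invariant[OF \<open>0 < l\<close> \<delta>_ge _ leading_term_bounds[OF p_lead a_nz \<delta>_ge]
          power_series_weighted_estimate[OF q_series _ order]]) simp_all
qed

end
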